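(* Let $H_1$ and $H_2$ be graphs such that either (i) $m_2(H_1) > m_2(H_2) > 1$, $H_2$ is strictly $2$-balanced and $H_1$ is strictly balanced with respect to $d_2(\cdot,H_2)$; or (ii) $m_2(H_1) = m_2(H_2) > 1$ and $H_1$ and $H_2$ are both strictly $2$-balanced. Then $H_1$ and $H_2$ are both $2$-connected.
   Context: For a graph $H$ write $v_H=|V(H)|$, $e_H=|E(H)|$. Define $d_2(H) = (e_H-1)/(v_H-2)$ if $H$ is non-empty and $v_H \geq 3$; $d_2(K_2)=1/2$; $d_2(H)=0$ otherwise. Let $m_2(H)=\max\{d_2(J) : J \subseteq H\}$. $H$ is strictly $2$-balanced if $d_2(J) < m_2(H)$ for every proper subgraph $J \subsetneq H$. For graphs $H_1,H_2$ define $d_2(H_1,H_2) = e_{H_1}/(v_{H_1} - 2 + 1/m_2(H_2))$ if $H_2$ is non-empty and $v_{H_1} \geq 2$, and $0$ otherwise; $m_2(H_1,H_2) = \max\{d_2(J,H_2) : J \subseteq H_1\}$. $H_1$ is strictly balanced with respect to $d_2(\cdot,H_2)$ if $d_2(J,H_2) < m_2(H_1,H_2)$ for every proper subgraph $J \subsetneq H_1$. *)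

theory Defs
  imports Main Complex_Main
begin

definition is_graph :: "'a set \<Rightarrow> 'a set set \<Rightarrow> bool" where
  "is_graph V E \<longleftrightarrow> finite V \<and> (\<forall>e\<in>E. e \<subseteq> V \<and> card e = 2)"

definition subgraph :: "'a set \<Rightarrow> 'a set set \<Rightarrow> 'a set \<Rightarrow> 'a set set \<Rightarrow> bool" where
  "subgraph V' E' V E \<longleftrightarrow> is_graph V' E' \<and> V' \<subseteq> V \<and> E' \<subseteq> E"

definition d2 :: "'a set \<Rightarrow> 'a set set \<Rightarrow> real" where
  "d2 V E = (if E \<noteq> {} \<and> card V \<ge> 3 then (real (card E) - 1) / (real (card V) - 2)
             else if card V = 2 \<and> card E = 1 then 1/2 else 0)"

definition m2 :: "'a set \<Rightarrow> 'a set set \<Rightarrow> real" where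
  "m2 V E = Max {d2 V' E' | V' E'. subgraph V' E' V E}"

definition strictly_2_balanced :: "'a set \<Rightarrow> 'a set set \<Rightarrow> bool" where
  "strictly_2_balanced V E \<longleftrightarrow>
     (\<forall>V' E'. subgraph V' E' V E \<and> (V', E') \<noteq> (V, E) \<longrightarrow> d2 V' E' < m2 V E)"

definition d2_pair :: "'a set \<Rightarrow> 'a set set \<Rightarrow> 'b set \<Rightarrow> 'b set set \<Rightarrow> real" where
  "d2_pair V1 E1 V2 E2 = (if E2 \<noteq> {} \<and> card V1 \<ge> 2
       then real (card E1) / (real (card V1) - 2 + 1 / m2 V2 E2) else 0)"

definition m2_pair :: "'a set \<Rightarrow> 'a set set \<Rightarrow> 'b set \<Rightarrow> 'b set set \<Rightarrow> real" where
  "m2_pair V1 E1 V2 E2 = Max {d2_pair V' E' V2 E2 | V' E'. subgraph V' E' V1 E1}"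

definition strictly_balanced_wrt_d2 :: "'a set \<Rightarrow> 'a set set \<Rightarrow> 'b set \<Rightarrow> 'b set set \<Rightarrow> bool" where
  "strictly_balanced_wrt_d2 V1 E1 V2 E2 \<longleftrightarrow>
     (\<forall>V' E'. subgraph V' E' V1 E1 \<and> (V', E') \<noteq> (V1, E1) \<longrightarrow>
        d2_pair V' E' V2 E2 < m2_pair V1 E1 V2 E2)"

definition connected_graph :: "'a set \<Rightarrow> 'a set set \<Rightarrow> bool" where
  "connected_graph V E \<longleftrightarrow> V \<noteq> {} \<and>
     (\<forall>u\<in>V. \<forall>v\<in>V. (u, v) \<in> {(a, b). {a, b} \<in> E}\<^sup>*)"

definition two_connected :: "'a set \<Rightarrow> 'a set set \<Rightarrow> bool" where
  "two_connected V E \<longleftrightarrow> card V \<ge> 3 \<and> connected_graph V E \<and>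
     (\<forall>x\<in>V. connected_graph (V - {x}) {e \<in> E. x \<notin> e})"

end

theory Submission
  imports Defs
begin

text \<open>Both hypotheses make the graph the unique maximiser of a density of the form
  (e - a) / (v - b): we get e(H) - a = D (v(H) - b), while every proper subgraph J with at
  least two vertices has e(J) - a \<le> D (v(J) - b), where D (b - 1) > a.  For d2 take a = 1,
  b = 2, D = m2(H); for d2(-, H2) take a = 0, b = 2 - 1/m2(H2), D = m2(H1, H2).
  Deleting an isolated vertex would give a proper subgraph that is too dense.  If H is
  disconnected or has a cut vertex, its edges split between two proper induced subgraphs on
  vertex sets A, B with |A \<inter> B| \<le> 1, so e(H) - 2a \<le> D (v(H) + 1 - 2b), which
  contradicts the equality for H because D (b - 1) > a.\<close>


lemma is_graph_finite_edges:
  assumes "is_graph V E"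
  shows "finite E"
proof -
  have "E \<subseteq> Pow V" "finite V" using assms unfolding is_graph_def by blast+
  then show ?thesis by (meson finite_Pow_iff finite_subset)
qed

lemma is_graph_edgeE:
  assumes "is_graph V E" "e \<in> E"
  obtains p q where "e = {p, q}" "p \<noteq> q" "p \<in> V" "q \<in> V"
  using assms unfolding is_graph_def by (metis card_2_iff insert_subset)

lemma two_le_card_if_edge_subset:
  assumes "is_graph V E" "e \<in> E" "e \<subseteq> A" "finite A"
  shows "2 \<le> card A"
  using assms card_mono unfolding is_graph_def by metis

lemma is_graph_delete_vertex:
  assumes "is_graph V E"
  shows "is_graph (V - {x}) {e \<in> E. x \<notin> e}"
  using assms unfolding is_graph_def by blast

lemma subgraph_induced:
  assumes "is_graph V E" "A \<subseteq> V"
  shows "subgraph A {e \<in> E. e \<subseteq> A} V E"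
  using assms finite_subset unfolding subgraph_def is_graph_def by blast

definition component :: "'a set \<Rightarrow> 'a set set \<Rightarrow> 'a \<Rightarrow> 'a set" where
  "component V E u = {w \<in> V. (u, w) \<in> {(a, b). {a, b} \<in> E}\<^sup>*}"

lemma edge_subset_component_or_complement:
  assumes "is_graph V E" "e \<in> E"
  shows "e \<subseteq> component V E u \<or> e \<subseteq> V - component V E u"
proof -
  obtain p q where pq: "e = {p, q}" "p \<in> V" "q \<in> V" using is_graph_edgeE[OF assms] by metis
  have "(p, q) \<in> {(a, b). {a, b} \<in> E}" "(q, p) \<in> {(a, b). {a, b} \<in> E}"
    using assms(2) pq(1) by (auto simp: insert_commute)
  then have "p \<in> component V E u \<longleftrightarrow> q \<in> component V E u"
    using pq unfolding component_def by (auto intro: rtrancl_into_rtrancl)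
  then show ?thesis using pq by auto
qed

definition separation :: "'a set \<Rightarrow> 'a set set \<Rightarrow> 'a set \<Rightarrow> 'a set \<Rightarrow> bool" where
  "separation V E A B \<longleftrightarrow> A \<union> B = V \<and> A \<noteq> V \<and> B \<noteq> V \<and> card (A \<inter> B) \<le> 1
     \<and> 2 \<le> card A \<and> 2 \<le> card B \<and> (\<forall>e\<in>E. e \<subseteq> A \<or> e \<subseteq> B)"

lemma separation_if_not_connected:
  assumes g: "is_graph V E" and no_isolated: "\<And>u. u \<in> V \<Longrightarrow> \<exists>e\<in>E. u \<in> e"
    and uv: "u \<in> V" "v \<in> V" and not_reach: "(u, v) \<notin> {(a, b). {a, b} \<in> E}\<^sup>*"
  shows "separation V E (component V E u) (V - component V E u)"
proof -
  let ?A = "component V E u" and ?B = "V - component V E u"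
  have fV: "finite V" using g unfolding is_graph_def by blast
  have split: "\<forall>e\<in>E. e \<subseteq> ?A \<or> e \<subseteq> ?B"
    using edge_subset_component_or_complement[OF g] by blast
  have uA: "u \<in> ?A" using uv(1) unfolding component_def by blast
  have vB: "v \<in> ?B" using uv(2) not_reach unfolding component_def by blast
  have AV: "?A \<subseteq> V" unfolding component_def by blast
  have card: "2 \<le> card S"
    if SV: "S \<subseteq> V" and w: "w \<in> S" "w \<notin> T" and ST: "\<forall>e\<in>E. e \<subseteq> S \<or> e \<subseteq> T" for w S T
  proof -
    obtain e where e: "e \<in> E" "w \<in> e" using no_isolated SV w(1) by blast
    then have "e \<subseteq> S" using w(2) ST by blast
    then show ?thesis using two_le_card_if_edge_subset[OF g e(1)] finite_subset[OF SV fV] by blast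
  qed
  have "2 \<le> card ?A" using card[OF AV uA _ split] vB uA by blast
  moreover have "2 \<le> card ?B" using card[of ?B v ?A] split vB by blast
  moreover have "?A \<union> ?B = V" using AV by blast
  moreover have "?A \<noteq> V" using vB by (metis Diff_cancel empty_iff)
  moreover have "?B \<noteq> V" using uA uv(1) by (metis DiffD2)
  moreover have "card (?A \<inter> ?B) \<le> 1" by (simp add: Int_Diff)
  ultimately show ?thesis using split unfolding separation_def by blast
qed

lemma separation_if_cut_vertex:
  assumes g: "is_graph V E" and x: "x \<in> V" and uv: "u \<in> V - {x}" "v \<in> V - {x}"
    and not_reach: "(u, v) \<notin> {(a, b). {a, b} \<in> {e \<in> E. x \<notin> e}}\<^sup>*"
  shows "separation V E (insert x (component (V - {x}) {e \<in> E. x \<notin> e} u))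
           (insert x (V - {x} - component (V - {x}) {e \<in> E. x \<notin> e} u))"
proof -
  define C where "C = component (V - {x}) {e \<in> E. x \<notin> e} u"
  have fV: "finite V" using g unfolding is_graph_def by blast
  have CV: "C \<subseteq> V - {x}" unfolding C_def component_def by blast
  have uC: "u \<in> C" and vC: "v \<notin> C" using uv not_reach unfolding C_def component_def by auto
  have split: "e \<subseteq> insert x C \<or> e \<subseteq> insert x (V - {x} - C)" if e: "e \<in> E" for e
  proof (cases "x \<in> e")
    case True
    obtain p q where "e = {p, q}" "p \<in> V" "q \<in> V" using is_graph_edgeE[OF g e] by metis
    with True show ?thesis by blast
  next
    case False
    then have "e \<in> {e \<in> E. x \<notin> e}" using e by blast
    from edge_subset_component_or_complement[OF is_graph_delete_vertex[OF g] this]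
    show ?thesis unfolding C_def by blast
  qed
  have "2 \<le> card (insert x C)"
    using card_mono[of "insert x C" "{x, u}"] uC uv finite_subset[OF CV] fV by auto
  moreover have "2 \<le> card (insert x (V - {x} - C))"
    using card_mono[of "insert x (V - {x} - C)" "{x, v}"] vC uv fV by auto
  moreover have "insert x C \<union> insert x (V - {x} - C) = V" using CV x by blast
  moreover have "card (insert x C \<inter> insert x (V - {x} - C)) \<le> 1"
  proof -
    have "insert x C \<inter> insert x (V - {x} - C) = {x}" by blast
    then show ?thesis by simp
  qed
  moreover have "v \<notin> insert x C" "u \<notin> insert x (V - {x} - C)" using uv vC uC by blast+
  then have "insert x C \<noteq> V" "insert x (V - {x} - C) \<noteq> V" using uv by (metis DiffD1)+
  ultimately show ?thesis using split unfolding separation_def C_def[symmetric] by blast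
qed

lemma two_connected_if_no_separation:
  assumes g: "is_graph V E" and "card V \<ge> 3"
    and no_isolated: "\<And>u. u \<in> V \<Longrightarrow> \<exists>e\<in>E. u \<in> e"
    and no_separation: "\<And>A B. \<not> separation V E A B"
  shows "two_connected V E"
  unfolding two_connected_def connected_graph_def
proof (intro conjI ballI)
  show "card V \<ge> 3" by fact
  then show "V \<noteq> {}" by auto
  show "(u, v) \<in> {(a, b). {a, b} \<in> E}\<^sup>*" if "u \<in> V" "v \<in> V" for u v
    using separation_if_not_connected[OF g no_isolated that] no_separation by blast
  fix x assume "x \<in> V"
  have "card (V - {x}) \<ge> 2" using \<open>card V \<ge> 3\<close> \<open>x \<in> V\<close> by auto
  then show "V - {x} \<noteq> {}" by (metis card.empty zero_neq_numeral le_zero_eq)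
  show "(u, v) \<in> {(a, b). {a, b} \<in> {e \<in> E. x \<notin> e}}\<^sup>*" if "u \<in> V - {x}" "v \<in> V - {x}" for u v
    using separation_if_cut_vertex[OF g \<open>x \<in> V\<close> that] no_separation by blast
qed

lemma separation_card_edges:
  assumes g: "is_graph V E" and sep: "separation V E A B"
  shows "card E = card {e \<in> E. e \<subseteq> A} + card {e \<in> E. e \<subseteq> B}"
proof -
  have "finite E" using is_graph_finite_edges[OF g] .
  moreover have "E = {e \<in> E. e \<subseteq> A} \<union> {e \<in> E. e \<subseteq> B}" using sep unfolding separation_def by blast
  moreover have "{e \<in> E. e \<subseteq> A} \<inter> {e \<in> E. e \<subseteq> B} = {}"
  proof -
    have "finite (A \<inter> B)" "card (A \<inter> B) \<le> 1"
      using g sep finite_subset unfolding is_graph_def separation_def by auto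
    then have "\<not> e \<subseteq> A \<inter> B" if "e \<in> E" for e
      using g that card_mono[of "A \<inter> B" e] unfolding is_graph_def by fastforce
    then show ?thesis by blast
  qed
  ultimately show ?thesis by (metis card_Un_disjoint finite_Un)
qed

lemma separation_card_vertices:
  assumes "finite V" "separation V E A B"
  shows "card A + card B \<le> card V + 1"
proof -
  have "finite A" "finite B" using assms finite_subset unfolding separation_def by blast+
  then have "card A + card B = card V + card (A \<inter> B)"
    using card_Un_Int assms(2) unfolding separation_def by metis
  then show ?thesis using assms(2) unfolding separation_def by linarith
qed

lemma two_connected_if_density_extremal:
  fixes a b D :: real
  assumes g: "is_graph V E" and "card V \<ge> 3" and "D > 0" and "D * (b - 1) > a"
    and tight: "real (card E) - a = D * (real (card V) - b)"
    and proper: "\<And>V' E'. subgraph V' E' V E \<Longrightarrow> (V', E') \<noteq> (V, E) \<Longrightarrow> card V' \<ge> 2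
                   \<Longrightarrow> real (card E') - a \<le> D * (real (card V') - b)"
  shows "two_connected V E"
proof (rule two_connected_if_no_separation[OF g \<open>card V \<ge> 3\<close>])
  have fV: "finite V" using g unfolding is_graph_def by blast
  show "\<exists>e\<in>E. u \<in> e" if u: "u \<in> V" for u
  proof (rule ccontr)
    assume "\<not> (\<exists>e\<in>E. u \<in> e)"
    then have "subgraph (V - {u}) E V E" using g unfolding subgraph_def is_graph_def by blast
    moreover have "(V - {u}, E) \<noteq> (V, E)" using u by blast
    moreover have "card (V - {u}) = card V - 1" using u fV by simp
    ultimately have "real (card E) - a \<le> D * (real (card V - 1) - b)"
      using proper[of "V - {u}" E] \<open>card V \<ge> 3\<close> by fastforce
    then show False using tight \<open>D > 0\<close> \<open>card V \<ge> 3\<close> by (simp add: of_nat_diff algebra_simps)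
  qed
  show "\<not> separation V E A B" for A B
  proof
    assume sep: "separation V E A B"
    have part_bound: "real (card {e \<in> E. e \<subseteq> S}) - a \<le> D * (real (card S) - b)"
      if "S \<subseteq> V" "S \<noteq> V" "2 \<le> card S" for S
      using proper[OF subgraph_induced[OF g \<open>S \<subseteq> V\<close>]] that by blast
    have "real (card E) - 2 * a \<le> D * (real (card A) + real (card B) - 2 * b)"
      using part_bound[of A] part_bound[of B] sep separation_card_edges[OF g sep]
      unfolding separation_def by (auto simp: algebra_simps)
    also have "\<dots> \<le> D * (real (card V) + 1 - 2 * b)"
      using separation_card_vertices[OF fV sep] \<open>D > 0\<close> by simp
    finally show False using tight \<open>D * (b - 1) > a\<close> by (simp add: algebra_simps)
  qed
qed

lemma finite_subgraphs:
  assumes "is_graph V E"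
  shows "finite {(V', E'). subgraph V' E' V E}"
proof -
  have "{(V', E'). subgraph V' E' V E} \<subseteq> Pow V \<times> Pow E" unfolding subgraph_def by blast
  moreover have "finite (Pow V \<times> Pow E)"
    using assms is_graph_finite_edges unfolding is_graph_def by blast
  ultimately show ?thesis by (rule finite_subset)
qed

lemma Max_over_subgraphs_attained:
  assumes "is_graph V E"
  obtains V' E' where "subgraph V' E' V E" "Max {f V' E' | V' E'. subgraph V' E' V E} = f V' E'"
proof -
  have "{f V' E' | V' E'. subgraph V' E' V E} = (\<lambda>(V', E'). f V' E') ` {(V', E'). subgraph V' E' V E}"
    by auto
  then have "finite {f V' E' | V' E'. subgraph V' E' V E}"
    using finite_subgraphs[OF assms] by simp
  moreover have "subgraph {} {} V E" unfolding subgraph_def is_graph_def by simp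
  then have "{f V' E' | V' E'. subgraph V' E' V E} \<noteq> {}" by blast
  ultimately show ?thesis using Max_in that by blast
qed

lemma Max_over_subgraphs_eq_if_strict:
  assumes "is_graph V E"
    and strict: "\<And>V' E'. subgraph V' E' V E \<Longrightarrow> (V', E') \<noteq> (V, E)
                   \<Longrightarrow> f V' E' < Max {f V' E' | V' E'. subgraph V' E' V E}"
  shows "Max {f V' E' | V' E'. subgraph V' E' V E} = f V E"
proof -
  obtain V' E' where sub: "subgraph V' E' V E"
    and max: "Max {f V' E' | V' E'. subgraph V' E' V E} = f V' E'"
    by (rule Max_over_subgraphs_attained[OF assms(1)])
  have "(V', E') = (V, E)"
  proof (rule ccontr)
    assume "(V', E') \<noteq> (V, E)"
    from strict[OF sub this] max show False by simp
  qed
  with max show ?thesis by simp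
qed

lemma strictly_2_balanced_m2_eq_d2:
  assumes "is_graph V E" "strictly_2_balanced V E"
  shows "m2 V E = d2 V E"
  using Max_over_subgraphs_eq_if_strict[OF assms(1), of d2] assms(2)
  unfolding strictly_2_balanced_def m2_def by blast

lemma strictly_balanced_wrt_d2_m2_pair_eq_d2_pair:
  assumes "is_graph V1 E1" "strictly_balanced_wrt_d2 V1 E1 V2 E2"
  shows "m2_pair V1 E1 V2 E2 = d2_pair V1 E1 V2 E2"
  using Max_over_subgraphs_eq_if_strict[OF assms(1), of "\<lambda>V' E'. d2_pair V' E' V2 E2"] assms(2)
  unfolding strictly_balanced_wrt_d2_def m2_pair_def by blast

lemma m2_gt_oneD:
  assumes "is_graph V E" "m2 V E > 1"
  shows "E \<noteq> {}" "card V \<ge> 3"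
proof -
  obtain V' E' where sub: "subgraph V' E' V E" and "m2 V E = d2 V' E'"
    by (rule Max_over_subgraphs_attained[OF assms(1), of d2, folded m2_def])
  then have "E' \<noteq> {}" "card V' \<ge> 3"
    using assms(2) unfolding d2_def by (auto split: if_splits)
  moreover have "E' \<subseteq> E" "card V' \<le> card V"
    using sub assms(1) card_mono unfolding subgraph_def is_graph_def by auto
  ultimately show "E \<noteq> {}" "card V \<ge> 3" by auto
qed

lemma card_edges_le_1_if_card_2:
  assumes "is_graph V E" "card V = 2"
  shows "card E \<le> 1"
proof -
  have "E \<subseteq> {V}"
    using assms card_subset_eq unfolding is_graph_def by (metis singleton_iff subsetI)
  then show ?thesis using card_mono[of "{V}" E] by simp
qed

lemma card_edges_le_if_d2_less:
  assumes g: "is_graph V E" and "card V \<ge> 2" and "d2 V E < D" and "D > 0"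
  shows "real (card E) - 1 \<le> D * (real (card V) - 2)"
proof (cases "E \<noteq> {} \<and> card V \<ge> 3")
  case True
  then have "(real (card E) - 1) / (real (card V) - 2) < D"
    using \<open>d2 V E < D\<close> unfolding d2_def by simp
  moreover have "real (card V) - 2 > 0" using True by simp
  ultimately show ?thesis by (simp add: pos_divide_less_eq)
next
  case False
  then consider "E = {}" | "card V = 2" using \<open>card V \<ge> 2\<close> by linarith
  then show ?thesis
  proof cases
    case 1
    have "D * (real (card V) - 2) \<ge> 0" using \<open>card V \<ge> 2\<close> \<open>D > 0\<close> by simp
    then show ?thesis using 1 by simp
  next
    case 2
    then show ?thesis using card_edges_le_1_if_card_2[OF g] by simp
  qed
qed

lemma two_connected_if_strictly_2_balanced:
  assumes g: "is_graph V E" and bal: "strictly_2_balanced V E" and m2: "m2 V E > 1"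
  shows "two_connected V E"
proof (rule two_connected_if_density_extremal[where a = 1 and b = 2 and D = "m2 V E"])
  have "E \<noteq> {}" "card V \<ge> 3" using m2_gt_oneD[OF g m2] by auto
  then show "real (card E) - 1 = m2 V E * (real (card V) - 2)"
    using strictly_2_balanced_m2_eq_d2[OF g bal] unfolding d2_def by simp
  show "real (card E') - 1 \<le> m2 V E * (real (card V') - 2)"
    if "subgraph V' E' V E" "(V', E') \<noteq> (V, E)" "card V' \<ge> 2" for V' E'
    using that bal m2 card_edges_le_if_d2_less[of V' E' "m2 V E"]
    unfolding strictly_2_balanced_def subgraph_def by simp
qed (use g m2 m2_gt_oneD in auto)

lemma two_connected_if_strictly_balanced_wrt_d2:
  assumes g1: "is_graph V1 E1" and g2: "is_graph V2 E2"
    and bal: "strictly_balanced_wrt_d2 V1 E1 V2 E2"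
    and m1: "m2 V1 E1 > 1" and m2: "m2 V2 E2 > 1"
  shows "two_connected V1 E1"
proof -
  define c where "c = 1 / m2 V2 E2"
  define D where "D = m2_pair V1 E1 V2 E2"
  have c: "0 < c" "c < 1" using m2 unfolding c_def by auto
  have "E1 \<noteq> {}" "card V1 \<ge> 3" "E2 \<noteq> {}" using m2_gt_oneD g1 g2 m1 m2 by auto
  then have D: "D = real (card E1) / (real (card V1) - 2 + c)"
    using strictly_balanced_wrt_d2_m2_pair_eq_d2_pair[OF g1 bal]
    unfolding D_def d2_pair_def c_def by simp
  have den: "real (card V1) - 2 + c > 0" using \<open>card V1 \<ge> 3\<close> c by simp
  have "card E1 > 0" using \<open>E1 \<noteq> {}\<close> is_graph_finite_edges[OF g1] by (simp add: card_gt_0_iff)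
  then have "D > 0" unfolding D using den by simp
  show ?thesis
  proof (rule two_connected_if_density_extremal[where a = 0 and b = "2 - c" and D = D, OF g1])
    show "real (card E1) - 0 = D * (real (card V1) - (2 - c))"
      unfolding D using den by (simp add: diff_diff_eq2 add.commute add_diff_eq)
    show "D * (2 - c - 1) > 0" using \<open>D > 0\<close> c by simp
    show "real (card E') - 0 \<le> D * (real (card V') - (2 - c))"
      if "subgraph V' E' V1 E1" "(V', E') \<noteq> (V1, E1)" "card V' \<ge> 2" for V' E'
    proof -
      have "d2_pair V' E' V2 E2 < D"
        using that bal unfolding strictly_balanced_wrt_d2_def D_def by blast
      then have "real (card E') / (real (card V') - 2 + c) < D"
        using that(3) \<open>E2 \<noteq> {}\<close> unfolding d2_pair_def c_def by simp
      moreover have "real (card V') - 2 + c > 0" using that(3) c by simp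
      ultimately show ?thesis by (simp add: pos_divide_less_eq algebra_simps)
    qed
  qed (use \<open>card V1 \<ge> 3\<close> \<open>D > 0\<close> in auto)
qed

theorem lemma4p1:
  fixes V1 :: "'a set" and E1 :: "'a set set" and V2 :: "'b set" and E2 :: "'b set set"
  assumes "is_graph V1 E1" and "is_graph V2 E2"
  assumes "(m2 V1 E1 > m2 V2 E2 \<and> m2 V2 E2 > 1 \<and> strictly_2_balanced V2 E2
              \<and> strictly_balanced_wrt_d2 V1 E1 V2 E2)
         \<or> (m2 V1 E1 = m2 V2 E2 \<and> m2 V2 E2 > 1 \<and> strictly_2_balanced V1 E1
              \<and> strictly_2_balanced V2 E2)"
  shows "two_connected V1 E1 \<and> two_connected V2 E2"
  using assms(3)
proof
  assume "m2 V1 E1 > m2 V2 E2 \<and> m2 V2 E2 > 1 \<and> strictly_2_balanced V2 E2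
              \<and> strictly_balanced_wrt_d2 V1 E1 V2 E2"
  then show ?thesis
    using two_connected_if_strictly_balanced_wrt_d2[OF assms(1,2)]
      two_connected_if_strictly_2_balanced[OF assms(2)] by auto
next
  assume "m2 V1 E1 = m2 V2 E2 \<and> m2 V2 E2 > 1 \<and> strictly_2_balanced V1 E1
              \<and> strictly_2_balanced V2 E2"
  then show ?thesis
    using two_connected_if_strictly_2_balanced[OF assms(1)]
      two_connected_if_strictly_2_balanced[OF assms(2)] by auto
qed

end
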